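(* Let $(g,f)$ be a strong sample mechanism on $\mathcal{G}^1_n$ and let $S\subseteq N$. For any nomination profiles $\mathbf{x},\mathbf{x}'\in\mathcal{G}^1_n$ with $\mathbf{x}_{-S}=\mathbf{x}'_{-S}$ (i.e., every vertex outside $S$ casts the same vote in $\mathbf{x}$ and $\mathbf{x}'$), if $S\setminus g(\mathbf{x})\neq\emptyset$ then $S\setminus g(\mathbf{x}')\neq\emptyset$.
   Context: $N=\{1,\dots,n\}$. $\mathcal{G}^1_n$ is the set of directed graphs on $N$ without self-loops in which every vertex has out-degree exactly $1$; a profile $\mathbf{x}$ is written as a tuple with $x_u\in N\setminus\{u\}$ the vertex nominated by $u$, and $(x'_u,\mathbf{x}_{-u})$ denotes the profile where $u$'s vote is changed to $x'_u$. $\mathbf{x}_{-S}$ denotes the graph obtained by deleting all outgoing edges of vertices in $S$. For a profile $\mathbf{x}$ and $S\subseteq N$, $W_S(\mathbf{x})=\{w\in N\setminus S:\ (v,w)\text{ is an edge for some } v\in S\}$. A sample mechanism $(g,f)$ first selects a sample set $g(\mathbf{x})$ using a function $g:\mathcal{G}^1_n\to 2^N\setminus\{\emptyset\}$ and then applies a (possibly randomized) selection rule $f$ whose range is restricted to $W_{g(\mathbf{x})}(\mathbf{x})$ (no winner if this set is empty). It is a strong sample mechanism if $g(x'_u,\mathbf{x}_{-u})=g(\mathbf{x})$ for all $\mathbf{x}\in\mathcal{G}^1_n$, all $u\in g(\mathbf{x})$ and all $x'_u\in N\setminus\{u\}$. *)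

theory Defs
  imports Main
begin

text \<open>Profiles in G^1_n: each vertex u in N = {1..n} nominates x u in N - {u}.
  Profiles are represented extensionally (value 0 outside N) so that each
  graph corresponds to exactly one function.\<close>
definition profiles :: "nat \<Rightarrow> (nat \<Rightarrow> nat) set" where
  "profiles n = {x. (\<forall>u\<in>{1..n}. x u \<in> {1..n} - {u}) \<and> (\<forall>u. u \<notin> {1..n} \<longrightarrow> x u = 0)}"

definition sample_fun :: "nat \<Rightarrow> ((nat \<Rightarrow> nat) \<Rightarrow> nat set) \<Rightarrow> bool" where
  "sample_fun n g \<longleftrightarrow> (\<forall>x\<in>profiles n. g x \<noteq> {} \<and> g x \<subseteq> {1..n})"

text \<open>Strong sample mechanism condition (only concerns g).\<close>
definition strong_sample :: "nat \<Rightarrow> ((nat \<Rightarrow> nat) \<Rightarrow> nat set) \<Rightarrow> bool" where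
  "strong_sample n g \<longleftrightarrow> sample_fun n g \<and>
     (\<forall>x\<in>profiles n. \<forall>u\<in>g x. \<forall>v\<in>{1..n} - {u}. g (x(u := v)) = g x)"

end

theory Submission
  imports Defs
begin

text \<open>Suppose every member of S were sampled at x'. Members of the sample may change
  their votes without changing the sample, so the members of S can switch from their
  votes in x' to their votes in x one at a time, the sample staying g x' throughout.
  The final profile is x, hence g x = g x' contains S, a contradiction.\<close>

lemma override_on_profiles:
  assumes "x \<in> profiles n" and "y \<in> profiles n"
  shows "override_on x y T \<in> profiles n"
  using assms unfolding profiles_def override_on_def by auto

lemma override_on_eq_profile:
  assumes "x \<in> profiles n" and "y \<in> profiles n"
    and "\<forall>u\<in>{1..n} - T. x u = y u"
  shows "override_on x y T = y"
proof
  fix u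
  show "override_on x y T u = y u"
    using assms unfolding profiles_def override_on_def by (cases "u \<in> {1..n}") auto
qed

lemma strong_sample_override_on_sample:
  assumes ss: "strong_sample n g"
    and x: "x \<in> profiles n" and y: "y \<in> profiles n"
    and T: "T \<subseteq> g x"
  shows "g (override_on x y T) = g x"
proof -
  have "g x \<subseteq> {1..n}"
    using ss x unfolding strong_sample_def sample_fun_def by blast
  then have "finite T"
    using T finite_subset by blast
  from this T show ?thesis
  proof (induction T rule: finite_induct)
    case empty
    show ?case by simp
  next
    case (insert a T)
    let ?z = "override_on x y T"
    have IH: "g ?z = g x"
      using insert by blast
    have a: "a \<in> g ?z" "a \<in> {1..n}"
      using insert.prems IH \<open>g x \<subseteq> {1..n}\<close> by auto
    then have "y a \<in> {1..n} - {a}"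
      using y unfolding profiles_def by blast
    then have "g (?z(a := y a)) = g ?z"
      using ss override_on_profiles[OF x y] a unfolding strong_sample_def by blast
    moreover have "override_on x y (insert a T) = ?z(a := y a)"
      by (simp only: override_on_insert)
    ultimately show ?case
      using IH by (simp only:)
  qed
qed

theorem mainTheorem2:
  fixes n :: nat and g :: "(nat \<Rightarrow> nat) \<Rightarrow> nat set"
    and S :: "nat set" and x x' :: "nat \<Rightarrow> nat"
  assumes "strong_sample n g"
    and "S \<subseteq> {1..n}"
    and "x \<in> profiles n" and "x' \<in> profiles n"
    and "\<forall>u\<in>{1..n} - S. x u = x' u"
    and "S - g x \<noteq> {}"
  shows "S - g x' \<noteq> {}"
proof
  assume "S - g x' = {}"
  then have "S \<subseteq> g x'"
    by blast
  have "override_on x' x S = x"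
    using assms(5) by (intro override_on_eq_profile[OF assms(4,3)]) auto
  then have "g x = g x'"
    using strong_sample_override_on_sample[OF assms(1) assms(4) assms(3) \<open>S \<subseteq> g x'\<close>] by simp
  then show False
    using assms(6) \<open>S \<subseteq> g x'\<close> by blast
qed

end
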